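(* Let $f:\mathbb{S}^3\to\mathbb{S}^3$ be a smooth map and for $g\in\mathbb{S}^3$ let $M_g:\mathrm{Im}\,\mathbb{H}\to\mathrm{Im}\,\mathbb{H}$, $M_g(x)=f_*(gx)f(g)^{-1}$. Then $M_g$ is symmetric (with respect to the Euclidean scalar product on $\mathrm{Im}\,\mathbb{H}$) for all $g\in\mathbb{S}^3$ if and only if the graph $\Gamma_{f^{-1}}=\{(g,f(g)^{-1}):g\in\mathbb{S}^3\}$ is a Lagrangian submanifold of $S^3\times S^3$ with respect to the $2$-form $\Omega$.
   Context: $S^3$ is the group of unit quaternions, with Lie algebra $\mathfrak{su}(2)\cong\mathrm{Im}\,\mathbb{H}$ and $\mathrm{T}_g S^3=g\,\mathrm{Im}\,\mathbb{H}$. Let $\langle\cdot,\cdot\rangle:=-\tfrac1{12}B$ on $\mathfrak{su}(2)$, where $B$ is the Killing form (equivalently $\langle x,y\rangle=\tfrac23\,\mathrm{Re}(x\bar y)$). The nearly Kähler structure on $S^3\times S^3$ (identified with $S^3\times S^3\times S^3/\Delta S^3$ via $(g_1,g_2,g_3)\cdot(a_1,a_2)=(g_1a_1g_3^{-1},g_2a_2g_3^{-1})$) has fundamental $2$-form given at a point $(g_1,g_2)$ on tangent vectors $(X_1,X_2),(Y_1,Y_2)$ by $\Omega((X_1,X_2),(Y_1,Y_2))=\tfrac1{\sqrt3}\big(\langle g_1^{-1}X_1,g_2^{-1}Y_2\rangle-\langle g_2^{-1}X_2,g_1^{-1}Y_1\rangle\big)$. A $3$-dimensional submanifold $L\subset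 S^3\times S^3$ is called Lagrangian if $\Omega(A,B)=0$ for all $A,B\in\mathrm{T}L$ (note $\Omega$ is not closed). *)

theory Defs
  imports "HOL-Analysis.Analysis"
begin

text \<open>Quaternions H = R^4, represented as real \<times> real \<times> real \<times> real
  (components: real part, i, j, k).  The Euclidean inner product of this
  product type is Re(x * cnj y).\<close>

type_synonym quat = "real \<times> real \<times> real \<times> real"

fun qmult :: "quat \<Rightarrow> quat \<Rightarrow> quat" where
  "qmult (a1, b1, c1, d1) (a2, b2, c2, d2) =
     (a1*a2 - b1*b2 - c1*c2 - d1*d2,
      a1*b2 + b1*a2 + c1*d2 - d1*c2,
      a1*c2 - b1*d2 + c1*a2 + d1*b2,
      a1*d2 + b1*c2 - c1*b2 + d1*a2)"

fun qcnj :: "quat \<Rightarrow> quat" where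
  "qcnj (a, b, c, d) = (a, -b, -c, -d)"

definition qinv :: "quat \<Rightarrow> quat" where
  "qinv q = (1 / (norm q)\<^sup>2) *\<^sub>R qcnj q"

definition S3 :: "quat set" where
  "S3 = sphere 0 1"

definition ImH :: "quat set" where
  "ImH = {q. fst q = 0}"

text \<open>The metric <x,y> = -1/12 B(x,y) = 2/3 Re(x * cnj y) on su(2).\<close>

definition su2_inner :: "quat \<Rightarrow> quat \<Rightarrow> real" where
  "su2_inner x y = 2/3 * (x \<bullet> y)"

text \<open>The fundamental 2-form of the nearly Kaehler S^3 x S^3 at the point p = (g1,g2).\<close>

definition Omega :: "quat \<times> quat \<Rightarrow> quat \<times> quat \<Rightarrow> quat \<times> quat \<Rightarrow> real" where
  "Omega p X Y =
     1 / sqrt 3 * (su2_inner (qmult (qinv (fst p)) (fst X)) (qmult (qinv (snd p)) (snd Y))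
                 - su2_inner (qmult (qinv (snd p)) (snd X)) (qmult (qinv (fst p)) (fst Y)))"

definition tangent_space :: "('a::real_normed_vector) set \<Rightarrow> 'a \<Rightarrow> 'a set" where
  "tangent_space L p = {v. \<exists>\<gamma> e. e > 0 \<and> \<gamma> 0 = p \<and> (\<forall>t\<in>{-e<..<e}. \<gamma> t \<in> L)
                               \<and> (\<gamma> has_vector_derivative v) (at 0)}"

definition lagrangian :: "(quat \<times> quat) set \<Rightarrow> bool" where
  "lagrangian L \<longleftrightarrow>
     (\<forall>p\<in>L. \<forall>A\<in>tangent_space L p. \<forall>B\<in>tangent_space L p. Omega p A B = 0)"

fun ddiff :: "('a::real_normed_vector \<Rightarrow> 'b::real_normed_vector) \<Rightarrow> 'a list \<Rightarrow> 'a \<Rightarrow> 'b" where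
  "ddiff F [] = F"
| "ddiff F (v # vs) = (\<lambda>x. vector_derivative (\<lambda>t. ddiff F vs (x + t *\<^sub>R v)) (at 0))"

definition smooth_on :: "'a::real_normed_vector set \<Rightarrow> ('a \<Rightarrow> 'b::real_normed_vector) \<Rightarrow> bool" where
  "smooth_on U F \<longleftrightarrow> open U \<and>
     (\<forall>vs. continuous_on U (ddiff F vs) \<and>
        (\<forall>v. \<forall>x\<in>U. (\<lambda>t. ddiff F vs (x + t *\<^sub>R v)) differentiable (at 0)))"

text \<open>A smooth map f : S^3 \<rightarrow> S^3 is the restriction of a smooth map F defined on an
  open neighbourhood U of S^3 with F(S^3) \<subseteq> S^3.  Its differential at g is the
  Frechet derivative of F at g restricted to T_g S^3 = g Im H.\<close>

definition Mg :: "(quat \<Rightarrow> quat) \<Rightarrow> quat \<Rightarrow> quat \<Rightarrow> quat" where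
  "Mg F g x = qmult (frechet_derivative F (at g) (qmult g x)) (qinv (F g))"

definition graph_inv :: "(quat \<Rightarrow> quat) \<Rightarrow> (quat \<times> quat) set" where
  "graph_inv F = (\<lambda>g. (g, qinv (F g))) ` S3"

end

theory Submission
  imports Defs
begin

(* At a point (g, f(g)^-1) of the graph, a tangent vector is (v, d(inv \<circ> f)_g v) with
   v \<perp> g, i.e. v = g x for a unique x \<in> Im H.  Writing Df for the differential of f and using
   f(g) d(inv)_{f(g)}(w) = -w f(g)^-1 for unit quaternions, the 2-form evaluates on two such
   vectors (g x, ...), (g y, ...) to  2/(3 sqrt 3) (M_g x \<bullet> y - x \<bullet> M_g y).  Hence Omega
   vanishes on all tangent spaces exactly when every M_g is symmetric. *)

lemma segment_increment_bound:
  fixes F :: "'a::real_normed_vector \<Rightarrow> 'b::real_normed_vector"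
  assumes der: "\<And>y. y \<in> S \<Longrightarrow> ((\<lambda>t. F (y + t *\<^sub>R v)) has_vector_derivative D y) (at 0)"
    and bnd: "\<And>y. y \<in> S \<Longrightarrow> norm (D y - c) \<le> \<epsilon>"
    and S: "convex S" "p \<in> S" "p + s *\<^sub>R v \<in> S"
  shows "norm (F (p + s *\<^sub>R v) - F p - s *\<^sub>R c) \<le> 3 * \<epsilon> * \<bar>s\<bar>"
proof -
  define T where "T = {t. p + t *\<^sub>R v \<in> S}"
  have line_der: "((\<lambda>t. F (p + t *\<^sub>R v)) has_vector_derivative D (p + t *\<^sub>R v)) (at t within T)"
    if "t \<in> T" for t
  proof -
    have shift: "((\<lambda>r. r - t) has_vector_derivative 1) (at t)"
      by (auto intro!: derivative_eq_intros)
    have "((\<lambda>u. F ((p + t *\<^sub>R v) + u *\<^sub>R v)) \<circ> (\<lambda>r. r - t) has_vector_derivative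
            1 *\<^sub>R D (p + t *\<^sub>R v)) (at t)"
      using that by (intro vector_diff_chain_at[OF shift]) (simp add: T_def der)
    then show ?thesis
      by (auto simp: comp_def algebra_simps intro: has_vector_derivative_at_within)
  qed
  have seg: "closed_segment 0 s \<subseteq> T"
  proof
    fix t assume "t \<in> closed_segment 0 s"
    then obtain u where u: "0 \<le> u" "u \<le> 1" "t = u * s"
      by (auto simp: closed_segment_def)
    have "p + t *\<^sub>R v = (1 - u) *\<^sub>R p + u *\<^sub>R (p + s *\<^sub>R v)"
      using u by (simp add: algebra_simps)
    also have "\<dots> \<in> S" using S u by (intro convexD) auto
    finally show "t \<in> T" by (simp add: T_def)
  qed
  have "norm (F (p + s *\<^sub>R v) - F (p + 0 *\<^sub>R v) - (s - 0) *\<^sub>R D (p + 0 *\<^sub>R v)) \<le> norm (s - 0) * (2 * \<epsilon>)"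
  proof (rule vector_differentiable_bound_linearization[OF line_der seg])
    fix t assume "t \<in> T"
    then show "norm (D (p + t *\<^sub>R v) - D (p + 0 *\<^sub>R v)) \<le> 2 * \<epsilon>"
      using bnd[of "p + t *\<^sub>R v"] bnd[of p] S(2) norm_triangle_ineq4[of "D (p + t *\<^sub>R v) - c" "D p - c"]
      by (simp add: T_def)
  qed (use S(2) in \<open>auto simp: T_def\<close>)
  moreover have "norm (s *\<^sub>R (D p - c)) \<le> \<epsilon> * \<bar>s\<bar>"
    using bnd[OF S(2)] by (simp add: mult.commute[of \<epsilon>] mult_left_mono)
  ultimately show ?thesis
    using norm_triangle_ineq[of "F (p + s *\<^sub>R v) - F p - s *\<^sub>R D p" "s *\<^sub>R (D p - c)"]
    by (simp add: algebra_simps)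
qed

(* The partial coordinate sums of h along a set of basis vectors stay in the ball of radius
   DIM * |h|; needed so that the coordinate-by-coordinate path from x to x + h stays in U. *)
lemma basis_partial_sum_in_ball:
  fixes h :: "'a::euclidean_space"
  assumes "DIM('a) * norm h < \<delta>" and "B \<subseteq> Basis"
  shows "x + (\<Sum>b\<in>B. (h \<bullet> b) *\<^sub>R b) \<in> ball x \<delta>"
proof -
  have "norm (\<Sum>b\<in>B. (h \<bullet> b) *\<^sub>R b) \<le> (\<Sum>b\<in>B. \<bar>h \<bullet> b\<bar>)"
    using assms(2) by (intro sum_norm_le) (auto simp: subsetD)
  also have "\<dots> \<le> (\<Sum>b\<in>B. norm h)"
    using assms(2) by (intro sum_mono Basis_le_norm) auto
  also have "\<dots> \<le> DIM('a) * norm h"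
    using assms(2) by (simp add: card_mono mult_right_mono)
  finally show ?thesis using assms(1) by (simp add: dist_norm)
qed

(* Telescoping the segment estimate along the basis directions of B, one coordinate at a time. *)
lemma basis_partial_sum_increment_bound:
  fixes F :: "'a::euclidean_space \<Rightarrow> 'b::real_normed_vector"
  assumes der: "\<And>y b. y \<in> ball x \<delta> \<Longrightarrow> b \<in> Basis \<Longrightarrow>
                  ((\<lambda>t. F (y + t *\<^sub>R b)) has_vector_derivative D y b) (at 0)"
    and bnd: "\<And>y b. y \<in> ball x \<delta> \<Longrightarrow> b \<in> Basis \<Longrightarrow> norm (D y b - D x b) \<le> \<epsilon>"
    and h: "DIM('a) * norm h < \<delta>" and B: "B \<subseteq> Basis"
  shows "norm (F (x + (\<Sum>b\<in>B. (h \<bullet> b) *\<^sub>R b)) - F x - (\<Sum>b\<in>B. (h \<bullet> b) *\<^sub>R D x b))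
           \<le> 3 * \<epsilon> * (\<Sum>b\<in>B. \<bar>h \<bullet> b\<bar>)"
  using finite_subset[OF B finite_Basis] B
proof (induction B rule: finite_subset_induct')
  case empty
  then show ?case by simp
next
  case (insert b B)
  define q where "q = x + (\<Sum>b\<in>B. (h \<bullet> b) *\<^sub>R b)"
  have q_next: "x + (\<Sum>b\<in>insert b B. (h \<bullet> b) *\<^sub>R b) = q + (h \<bullet> b) *\<^sub>R b"
    using insert by (simp add: q_def algebra_simps)
  have "norm (F (q + (h \<bullet> b) *\<^sub>R b) - F q - (h \<bullet> b) *\<^sub>R D x b) \<le> 3 * \<epsilon> * \<bar>h \<bullet> b\<bar>"
  proof (rule segment_increment_bound[where S = "ball x \<delta>"])
    show "q \<in> ball x \<delta>"
      unfolding q_def using h insert by (intro basis_partial_sum_in_ball) auto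
    show "q + (h \<bullet> b) *\<^sub>R b \<in> ball x \<delta>"
      unfolding q_next[symmetric] using h insert by (intro basis_partial_sum_in_ball) auto
  qed (use der bnd insert in auto)
  then show ?case
    using insert norm_triangle_ineq[of "F (q + (h \<bullet> b) *\<^sub>R b) - F q - (h \<bullet> b) *\<^sub>R D x b"
        "F q - F x - (\<Sum>b\<in>B. (h \<bullet> b) *\<^sub>R D x b)"]
    by (simp add: q_next[folded q_def] q_def algebra_simps)
qed

lemma has_derivative_continuous_directional:
  fixes F :: "'a::euclidean_space \<Rightarrow> 'b::real_normed_vector"
  assumes U: "open U" "x \<in> U"
    and der: "\<And>y b. y \<in> U \<Longrightarrow> b \<in> Basis \<Longrightarrow>
                  ((\<lambda>t. F (y + t *\<^sub>R b)) has_vector_derivative D y b) (at 0)"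
    and cont: "\<And>b. b \<in> Basis \<Longrightarrow> continuous_on U (\<lambda>y. D y b)"
  shows "(F has_derivative (\<lambda>h. \<Sum>b\<in>Basis. (h \<bullet> b) *\<^sub>R D x b)) (at x)"
  unfolding has_derivative_at_alt
proof (intro conjI allI impI)
  show "bounded_linear (\<lambda>h. \<Sum>b\<in>Basis. (h \<bullet> b) *\<^sub>R D x b)"
    by (intro bounded_linear_sum bounded_linear_compose[OF bounded_linear_scaleR_left]
        bounded_linear_inner_left)
  fix e :: real assume "e > 0"
  define \<epsilon> where "\<epsilon> = e / (3 * DIM('a))"
  have "\<epsilon> > 0" using \<open>e > 0\<close> by (simp add: \<epsilon>_def)
  have "\<forall>\<^sub>F y in at x. \<forall>b\<in>Basis. dist (D y b) (D x b) < \<epsilon>"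
    using cont U \<open>\<epsilon> > 0\<close>
    by (intro eventually_ball_finite ballI tendstoD) (auto simp: continuous_on_eq_continuous_at isCont_def)
  then obtain \<delta>1 where "\<delta>1 > 0"
    and \<delta>1: "\<And>y. y \<noteq> x \<Longrightarrow> dist y x < \<delta>1 \<Longrightarrow> \<forall>b\<in>Basis. dist (D y b) (D x b) < \<epsilon>"
    by (auto simp: eventually_at)
  obtain \<delta>0 where "\<delta>0 > 0" and "ball x \<delta>0 \<subseteq> U"
    using U open_contains_ball by blast
  define \<delta> where "\<delta> = min \<delta>0 \<delta>1"
  have "\<delta> > 0" using \<open>\<delta>0 > 0\<close> \<open>\<delta>1 > 0\<close> by (simp add: \<delta>_def)
  show "\<exists>d>0. \<forall>y. norm (y - x) < d \<longrightarrow>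
          norm (F y - F x - (\<Sum>b\<in>Basis. ((y - x) \<bullet> b) *\<^sub>R D x b)) \<le> e * norm (y - x)"
  proof (intro exI[of _ "\<delta> / DIM('a)"] conjI allI impI)
    show "\<delta> / DIM('a) > 0" using \<open>\<delta> > 0\<close> by simp
    fix y assume "norm (y - x) < \<delta> / DIM('a)"
    then have small: "DIM('a) * norm (y - x) < \<delta>" by (simp add: field_simps)
    have "norm (F (x + (\<Sum>b\<in>Basis. ((y - x) \<bullet> b) *\<^sub>R b)) - F x
            - (\<Sum>b\<in>Basis. ((y - x) \<bullet> b) *\<^sub>R D x b)) \<le> 3 * \<epsilon> * (\<Sum>b\<in>Basis. \<bar>(y - x) \<bullet> b\<bar>)"
    proof (rule basis_partial_sum_increment_bound[where \<delta> = \<delta>])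
      fix z b :: 'a assume "z \<in> ball x \<delta>" "b \<in> Basis"
      then show "((\<lambda>t. F (z + t *\<^sub>R b)) has_vector_derivative D z b) (at 0)"
        using der \<open>ball x \<delta>0 \<subseteq> U\<close> by (auto simp: \<delta>_def)
      show "norm (D z b - D x b) \<le> \<epsilon>"
        using \<delta>1[of z] \<open>z \<in> ball x \<delta>\<close> \<open>b \<in> Basis\<close> \<open>\<epsilon> > 0\<close>
        by (cases "z = x") (auto simp: \<delta>_def dist_norm norm_minus_commute less_imp_le)
    qed (use small in auto)
    also have "\<dots> \<le> 3 * \<epsilon> * (DIM('a) * norm (y - x))"
      using \<open>\<epsilon> > 0\<close> Basis_le_norm[of _ "y - x"]
      by (intro mult_left_mono) (auto intro: order_trans[OF sum_mono[where g = "\<lambda>_. norm (y - x)"]])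
    also have "\<dots> = e * norm (y - x)" by (simp add: \<epsilon>_def)
    finally show "norm (F y - F x - (\<Sum>b\<in>Basis. ((y - x) \<bullet> b) *\<^sub>R D x b)) \<le> e * norm (y - x)"
      by (simp add: euclidean_representation)
  qed
qed

lemma smooth_on_differentiable:
  fixes F :: "'a::euclidean_space \<Rightarrow> 'b::real_normed_vector"
  assumes "smooth_on U F" and "x \<in> U"
  shows "F differentiable (at x)"
proof -
  have "open U" using assms(1) by (simp add: smooth_on_def)
  have "((\<lambda>t. F (y + t *\<^sub>R v)) has_vector_derivative ddiff F [v] y) (at 0)" if "y \<in> U" for y v
  proof -
    have "(\<lambda>t. ddiff F [] (y + t *\<^sub>R v)) differentiable (at 0)"
      using assms(1) that unfolding smooth_on_def by blast
    then show ?thesis by (simp add: vector_derivative_works)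
  qed
  moreover have "continuous_on U (ddiff F [v])" for v
    using assms(1) unfolding smooth_on_def by blast
  ultimately show ?thesis
    using has_derivative_continuous_directional[OF \<open>open U\<close> assms(2), of F "\<lambda>y v. ddiff F [v] y"]
    by (auto simp: differentiable_def)
qed

lemma has_vector_derivative_compose:
  assumes "(c has_vector_derivative w) (at t)" and "(G has_derivative DG) (at (c t))"
  shows "((\<lambda>s. G (c s)) has_vector_derivative DG w) (at t)"
proof -
  interpret DG: bounded_linear DG using assms(2) by (rule has_derivative_bounded_linear)
  show ?thesis
    using has_derivative_compose[OF assms(1)[unfolded has_vector_derivative_def] assms(2)]
    by (simp add: has_vector_derivative_def DG.scaleR)
qed

definition sphere_curve :: "'a::real_inner \<Rightarrow> 'a \<Rightarrow> real \<Rightarrow> 'a" where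
  "sphere_curve g v t = inverse (sqrt (1 + t\<^sup>2 * (v \<bullet> v))) *\<^sub>R (g + t *\<^sub>R v)"

lemma sphere_curve_norm:
  assumes "norm g = 1" and "v \<bullet> g = 0"
  shows "norm (sphere_curve g v t) = 1"
proof -
  have "g \<bullet> g = 1" using assms(1) by (simp add: dot_square_norm)
  then have "norm (g + t *\<^sub>R v) = sqrt (1 + t\<^sup>2 * (v \<bullet> v))"
    unfolding norm_eq_sqrt_inner using assms(2)
    by (simp add: inner_commute power2_eq_square algebra_simps)
  moreover have "1 + t\<^sup>2 * (v \<bullet> v) > 0" by (simp add: add_pos_nonneg)
  ultimately show ?thesis by (simp add: sphere_curve_def)
qed

lemma sphere_curve_0 [simp]: "sphere_curve g v 0 = g"
  by (simp add: sphere_curve_def)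

lemma sphere_curve_derivative: "(sphere_curve g v has_vector_derivative v) (at 0)"
proof -
  have "((\<lambda>t. inverse (sqrt (1 + t\<^sup>2 * (v \<bullet> v))) *\<^sub>R (g + t *\<^sub>R v)) has_vector_derivative
          inverse (sqrt (1 + 0\<^sup>2 * (v \<bullet> v))) *\<^sub>R (0 + 1 *\<^sub>R v) + 0 *\<^sub>R (g + 0 *\<^sub>R v)) (at 0)"
    unfolding has_vector_derivative_def
    by (rule derivative_eq_intros refl | simp add: add_pos_nonneg)+
  then show ?thesis by (simp add: sphere_curve_def[abs_def])
qed

lemma sphere_velocity_orthogonal:
  fixes c :: "real \<Rightarrow> 'a::real_inner"
  assumes "(c has_vector_derivative w) (at 0)" and "e > 0"
    and "\<And>t. t \<in> {-e<..<e} \<Longrightarrow> norm (c t) = 1"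
  shows "w \<bullet> c 0 = 0"
proof -
  have "((\<lambda>t. c t \<bullet> c t) has_derivative (\<lambda>h. c 0 \<bullet> (h *\<^sub>R w) + (h *\<^sub>R w) \<bullet> c 0)) (at 0)"
    using assms(1) unfolding has_vector_derivative_def by (auto intro!: derivative_eq_intros)
  moreover have "((\<lambda>t. c t \<bullet> c t) has_derivative (\<lambda>h. 0)) (at 0)"
  proof (rule has_derivative_transform_within_open[of "\<lambda>_. 1"])
    show "\<And>t. t \<in> {-e<..<e} \<Longrightarrow> 1 = c t \<bullet> c t"
      using assms(3) by (simp add: dot_square_norm)
  qed (use \<open>e > 0\<close> in auto)
  ultimately have "(\<lambda>h. c 0 \<bullet> (h *\<^sub>R w) + (h *\<^sub>R w) \<bullet> c 0) = (\<lambda>h. 0)"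
    by (rule has_derivative_unique)
  from fun_cong[OF this, of 1] show ?thesis by (simp add: inner_commute)
qed

lemma tangent_space_sphere_graph:
  fixes G :: "'a::real_inner \<Rightarrow> 'b::real_normed_vector"
  assumes G: "(G has_derivative DG) (at g)" and g: "norm g = 1"
  shows "tangent_space ((\<lambda>x. (x, G x)) ` sphere 0 1) (g, G g) = (\<lambda>v. (v, DG v)) ` {v. v \<bullet> g = 0}"
proof (intro equalityI subsetI)
  fix A assume "A \<in> tangent_space ((\<lambda>x. (x, G x)) ` sphere 0 1) (g, G g)"
  then obtain \<gamma> e where "e > 0" and \<gamma>0: "\<gamma> 0 = (g, G g)"
    and in_graph: "\<And>t. t \<in> {-e<..<e} \<Longrightarrow> \<gamma> t \<in> (\<lambda>x. (x, G x)) ` sphere 0 1"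
    and \<gamma>': "(\<gamma> has_vector_derivative A) (at 0)"
    unfolding tangent_space_def by blast
  define c where "c t = fst (\<gamma> t)" for t
  have c_sphere: "norm (c t) = 1" and snd_\<gamma>: "snd (\<gamma> t) = G (c t)" if "t \<in> {-e<..<e}" for t
    using in_graph[OF that] by (auto simp: c_def)
  have c': "(c has_vector_derivative fst A) (at 0)"
    using has_derivative_fst[OF \<gamma>'[unfolded has_vector_derivative_def]]
    by (simp add: has_vector_derivative_def c_def[abs_def])
  have "c 0 = g" using \<gamma>0 by (simp add: c_def)
  have "((\<lambda>t. snd (\<gamma> t)) has_vector_derivative snd A) (at 0)"
    using has_derivative_snd[OF \<gamma>'[unfolded has_vector_derivative_def]]
    by (simp add: has_vector_derivative_def)
  moreover have "((\<lambda>t. snd (\<gamma> t)) has_vector_derivative DG (fst A)) (at 0)"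
  proof (rule has_vector_derivative_transform_within_open[where S = "{-e<..<e}"])
    show "((\<lambda>t. G (c t)) has_vector_derivative DG (fst A)) (at 0)"
      using G \<open>c 0 = g\<close> by (intro has_vector_derivative_compose[OF c']) simp
  qed (use \<open>e > 0\<close> snd_\<gamma> in auto)
  ultimately have "snd A = DG (fst A)"
    by (rule vector_derivative_unique_at)
  moreover have "fst A \<bullet> g = 0"
    using sphere_velocity_orthogonal[OF c' \<open>e > 0\<close> c_sphere] \<open>c 0 = g\<close> by simp
  ultimately show "A \<in> (\<lambda>v. (v, DG v)) ` {v. v \<bullet> g = 0}"
    by (intro image_eqI[of _ _ "fst A"]) (auto simp: prod_eq_iff)
next
  fix A assume "A \<in> (\<lambda>v. (v, DG v)) ` {v. v \<bullet> g = 0}"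
  then obtain v where v: "v \<bullet> g = 0" and A: "A = (v, DG v)" by blast
  define \<gamma> where "\<gamma> t = (sphere_curve g v t, G (sphere_curve g v t))" for t
  have "(\<gamma> has_vector_derivative A) (at 0)"
    using has_derivative_Pair[OF sphere_curve_derivative[of g v, unfolded has_vector_derivative_def]
        has_vector_derivative_compose[OF sphere_curve_derivative, of G DG g v, unfolded has_vector_derivative_def]] G
    by (simp add: \<gamma>_def[abs_def] A has_vector_derivative_def)
  moreover have "\<gamma> t \<in> (\<lambda>x. (x, G x)) ` sphere 0 1" for t
    using sphere_curve_norm[OF g v] by (simp add: \<gamma>_def)
  ultimately show "A \<in> tangent_space ((\<lambda>x. (x, G x)) ` sphere 0 1) (g, G g)"
    unfolding tangent_space_def
    by (intro CollectI exI[of _ \<gamma>] exI[of _ 1]) (simp add: \<gamma>_def)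
qed

lemma unit_quat_iff: "norm ((a, b, c, d) :: quat) = 1 \<longleftrightarrow> a\<^sup>2 + b\<^sup>2 + c\<^sup>2 + d\<^sup>2 = 1"
  by (simp add: norm_Pair add.assoc)

lemma qinv_unit: "norm q = 1 \<Longrightarrow> qinv q = qcnj q"
  by (simp add: qinv_def)

lemma qcnj_qcnj [simp]: "qcnj (qcnj q) = q"
  by (cases q) simp

lemma qinv_qcnj_unit: "norm q = 1 \<Longrightarrow> qinv (qcnj q) = q"
  by (cases q) (simp add: qinv_def norm_Pair)

lemma qcnj_qmult_cancel:
  assumes "norm g = 1" shows "qmult (qcnj g) (qmult g x) = x"
proof -
  obtain a b c d where g: "g = (a, b, c, d)" by (cases g) auto
  obtain x1 x2 x3 x4 where x: "x = (x1, x2, x3, x4)" by (cases x) auto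
  have "a\<^sup>2 + b\<^sup>2 + c\<^sup>2 + d\<^sup>2 = 1" using assms g unit_quat_iff by simp
  then show ?thesis unfolding g x by simp algebra+
qed

lemma qmult_qcnj_cancel:
  assumes "norm g = 1" shows "qmult g (qmult (qcnj g) x) = x"
proof -
  obtain a b c d where g: "g = (a, b, c, d)" by (cases g) auto
  obtain x1 x2 x3 x4 where x: "x = (x1, x2, x3, x4)" by (cases x) auto
  have "a\<^sup>2 + b\<^sup>2 + c\<^sup>2 + d\<^sup>2 = 1" using assms g unit_quat_iff by simp
  then show ?thesis unfolding g x by simp algebra+
qed

(* The real part of x is recovered as (g x) \<bullet> g; thus g x \<perp> g exactly for imaginary x. *)
lemma inner_qmult_left_unit:
  assumes "norm g = 1" shows "qmult g x \<bullet> g = fst x"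
proof -
  obtain a b c d where g: "g = (a, b, c, d)" by (cases g) auto
  obtain x1 x2 x3 x4 where x: "x = (x1, x2, x3, x4)" by (cases x) auto
  have "a\<^sup>2 + b\<^sup>2 + c\<^sup>2 + d\<^sup>2 = 1" using assms g unit_quat_iff by simp
  then show ?thesis unfolding g x by simp algebra
qed

lemma orthogonal_eq_left_translate_ImH:
  assumes "norm g = 1" shows "{v. v \<bullet> g = 0} = qmult g ` ImH"
proof (intro equalityI subsetI)
  fix v assume "v \<in> {v. v \<bullet> g = 0}"
  then have "qmult (qcnj g) v \<in> ImH"
    using inner_qmult_left_unit[OF assms, of "qmult (qcnj g) v"]
    by (simp add: ImH_def qmult_qcnj_cancel[OF assms])
  then show "v \<in> qmult g ` ImH"
    by (rule image_eqI[rotated]) (simp add: qmult_qcnj_cancel[OF assms])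
qed (use inner_qmult_left_unit[OF assms] in \<open>auto simp: ImH_def\<close>)

definition Dqinv :: "quat \<Rightarrow> quat \<Rightarrow> quat" where
  "Dqinv q w = qcnj w - (2 * (q \<bullet> w)) *\<^sub>R qcnj q"

lemma qinv_has_derivative:
  assumes "norm q = 1" shows "(qinv has_derivative Dqinv q) (at q)"
proof -
  have qcnj_eq: "qcnj p = (fst p, - snd p)" for p by (cases p) auto
  have qinv_eq: "qinv = (\<lambda>p. inverse (p \<bullet> p) *\<^sub>R (fst p, - snd p))"
    by (rule ext) (simp add: qinv_def qcnj_eq power2_norm_eq_inner divide_inverse)
  have "q \<bullet> q = 1" using assms by (simp add: dot_square_norm)
  then show ?thesis
    unfolding qinv_eq
    by (auto intro!: derivative_eq_intros simp: Dqinv_def qcnj_eq inner_commute algebra_simps zero_prod_def)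
qed

lemma qmult_Dqinv:
  assumes "norm f = 1" shows "qmult f (Dqinv f w) = - qmult w (qcnj f)"
proof -
  obtain a b c d where f: "f = (a, b, c, d)" by (cases f) auto
  obtain x1 x2 x3 x4 where w: "w = (x1, x2, x3, x4)" by (cases w) auto
  have "a\<^sup>2 + b\<^sup>2 + c\<^sup>2 + d\<^sup>2 = 1" using assms f unit_quat_iff by simp
  then show ?thesis unfolding f w Dqinv_def by simp algebra+
qed

lemma Omega_graph_inv_tangent:
  assumes g: "norm g = 1" and f: "norm f = 1"
  shows "Omega (g, qinv f) (qmult g x, Dqinv f w1) (qmult g y, Dqinv f w2)
           = 2 / (3 * sqrt 3) * (qmult w1 (qcnj f) \<bullet> y - x \<bullet> qmult w2 (qcnj f))"
proof -
  have "qinv (qinv f) = f" using f by (simp add: qinv_unit qinv_qcnj_unit)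
  then show ?thesis
    using g f by (simp add: Omega_def su2_inner_def qinv_unit qcnj_qmult_cancel qmult_Dqinv algebra_simps)
qed

lemma tangent_space_graph_inv:
  assumes "F differentiable (at g)" and "g \<in> S3" and "F g \<in> S3"
  shows "tangent_space (graph_inv F) (g, qinv (F g))
           = (\<lambda>x. (qmult g x, Dqinv (F g) (frechet_derivative F (at g) (qmult g x)))) ` ImH"
proof -
  have g: "norm g = 1" and Fg: "norm (F g) = 1" using assms(2,3) by (simp_all add: S3_def)
  have "(F has_derivative frechet_derivative F (at g)) (at g)"
    using assms(1) by (simp add: frechet_derivative_works)
  from has_derivative_compose[OF this qinv_has_derivative[OF Fg]]
  have deriv: "((\<lambda>x. qinv (F x)) has_derivative (\<lambda>v. Dqinv (F g) (frechet_derivative F (at g) v))) (at g)" .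
  have graph: "graph_inv F = (\<lambda>x. (x, qinv (F x))) ` sphere 0 1"
    by (simp add: graph_inv_def S3_def)
  show ?thesis
    unfolding graph tangent_space_sphere_graph[OF deriv g] orthogonal_eq_left_translate_ImH[OF g] image_image ..
qed

lemma Omega_graph_inv_Mg:
  assumes "g \<in> S3" and "F g \<in> S3"
  shows "Omega (g, qinv (F g))
           (qmult g x, Dqinv (F g) (frechet_derivative F (at g) (qmult g x)))
           (qmult g y, Dqinv (F g) (frechet_derivative F (at g) (qmult g y)))
         = 2 / (3 * sqrt 3) * (Mg F g x \<bullet> y - x \<bullet> Mg F g y)"
proof -
  have g: "norm g = 1" and Fg: "norm (F g) = 1" using assms by (simp_all add: S3_def)
  show ?thesis
    unfolding Omega_graph_inv_tangent[OF g Fg] unfolding Mg_def qinv_unit[OF Fg] ..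
qed

lemma lagrangian_graph_inv_iff:
  "lagrangian (graph_inv F) \<longleftrightarrow>
     (\<forall>g\<in>S3. \<forall>A\<in>tangent_space (graph_inv F) (g, qinv (F g)).
        \<forall>B\<in>tangent_space (graph_inv F) (g, qinv (F g)). Omega (g, qinv (F g)) A B = 0)"
  by (simp add: lagrangian_def graph_inv_def)

theorem lemma4p1:
  fixes F :: "quat \<Rightarrow> quat" and U :: "quat set"
  assumes "S3 \<subseteq> U" and "smooth_on U F" and "F ` S3 \<subseteq> S3"
  shows "(\<forall>g\<in>S3. \<forall>x\<in>ImH. \<forall>y\<in>ImH. Mg F g x \<bullet> y = x \<bullet> Mg F g y)
         \<longleftrightarrow> lagrangian (graph_inv F)"
proof -
  have tangent: "tangent_space (graph_inv F) (g, qinv (F g))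
      = (\<lambda>x. (qmult g x, Dqinv (F g) (frechet_derivative F (at g) (qmult g x)))) ` ImH"
    if "g \<in> S3" for g
  proof (rule tangent_space_graph_inv[OF smooth_on_differentiable[OF assms(2)] that])
    show "g \<in> U" using assms(1) that by blast
    show "F g \<in> S3" using assms(3) that by blast
  qed
  have Omega: "Omega (g, qinv (F g))
      (qmult g x, Dqinv (F g) (frechet_derivative F (at g) (qmult g x)))
      (qmult g y, Dqinv (F g) (frechet_derivative F (at g) (qmult g y))) = 0
      \<longleftrightarrow> Mg F g x \<bullet> y = x \<bullet> Mg F g y" if "g \<in> S3" for g x y
  proof -
    have "F g \<in> S3" using assms(3) that by blast
    then show ?thesis unfolding Omega_graph_inv_Mg[of g F, OF that \<open>F g \<in> S3\<close>] by simp
  qed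
  have "(\<forall>A\<in>tangent_space (graph_inv F) (g, qinv (F g)).
           \<forall>B\<in>tangent_space (graph_inv F) (g, qinv (F g)). Omega (g, qinv (F g)) A B = 0)
        \<longleftrightarrow> (\<forall>x\<in>ImH. \<forall>y\<in>ImH. Mg F g x \<bullet> y = x \<bullet> Mg F g y)" if "g \<in> S3" for g
    by (simp only: tangent[OF that] ball_simps(9) Omega[OF that])
  then show ?thesis
    unfolding lagrangian_graph_inv_iff by simp
qed

end
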